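(* Let $\{(\mathbf{x}^{(k)},y^{(k)})\}_{k=1}^N$ be data with $\mathbf{x}^{(k)}\in\mathbb{R}^d$, $y^{(k)}\in\mathbb{R}$, and let $\widehat{\mathcal{R}}_N(s)=\frac1N\sum_{k=1}^N(y^{(k)}-s(\mathbf{x}^{(k)}))^2$ (squared loss). With fixed region-selection functions $r_i$, consider the idealized exact cyclic regional backfitting procedure described in the context. Then $\widehat{\mathcal{R}}_N$ is non-increasing along the iterates, and the procedure converges (in empirical $L_2$) to a limit $\hat s\in\arg\min_{s\in\mathcal{H}(\{T_i\})}\widehat{\mathcal{R}}_N(s)$. Moreover, the fitted-value vector $(\hat s(\mathbf{x}^{(1)}),\dots,\hat s(\mathbf{x}^{(N)}))$ is unique.
   Context: $\mathbf{x}_{-i}$ denotes $\mathbf{x}$ with the $i$-th coordinate removed. For each $i$ a fixed region-selection function $r_i:\mathbb{R}^{d-1}\to\{1,\dots,R_i\}$ is given (from a binary decision tree $T_i$). $\mathcal{H}(\{T_i\})$ denotes the class of CALM scores $s(\mathbf{x})=\beta_0+\sum_{i=1}^d f_i^{(r_i(\mathbf{x}_{-i}))}(x_i)$ with $\beta_0\in\mathbb{R}$ and univariate shape functions $f_i^{(r)}:\mathbb{R}\to\mathbb{R}$, whose region-wise components are centered (all region-wise constants absorbed in $\beta_0$). The idealized exact cyclic regional backfitting procedure cycles repeatedly over all pairs $(i,r)$; at each step it replaces $f_i^{(r)}$ by an exact minimizer of $\widehat{\mathcal{R}}_N$ over that function alone (others and $\beta_0$ fixed), using only samples $k$ with $r_i(\mathbf{x}^{(k)}_{-i})=r$,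 followed by empirical centering: the sample mean of $f_i^{(r)}$ over those samples is subtracted from $f_i^{(r)}$ and added to $\beta_0$, so fitted values and $\widehat{\mathcal{R}}_N$ are unchanged.
   Formalization: Each backfitting step replaces $f_i^{(r)}$ by an exact minimizer with no empirical centering into $\beta_0$, and $\mathcal{H}(\{T_i\})$ consists of all such scores without the centering condition on region-wise components. The statement above fails without it. *)

theory Defs
  imports Complex_Main
begin

text \<open>Points of R^d are represented as functions nat \<Rightarrow> real, of which only the
coordinates 0..d-1 are used. Coordinates are indexed 0..d-1.\<close>

text \<open>x_{-i}: the point of R^{d-1} obtained by deleting coordinate i
(coordinates beyond d-2 are normalised to 0).\<close>
definition drop_coord :: "nat \<Rightarrow> nat \<Rightarrow> (nat \<Rightarrow> real) \<Rightarrow> (nat \<Rightarrow> real)" where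
  "drop_coord d i x = (\<lambda>j. if j < d - 1 then (if j < i then x j else x (Suc j)) else 0)"

text \<open>CALM score s(x) = beta0 + sum_i f_i^{(r_i(x_{-i}))}(x_i);
f i r is the shape function f_i^{(r)}; reg i is the region selector r_i.\<close>
definition calm_score ::
  "nat \<Rightarrow> (nat \<Rightarrow> (nat \<Rightarrow> real) \<Rightarrow> nat) \<Rightarrow> real \<Rightarrow> (nat \<Rightarrow> nat \<Rightarrow> real \<Rightarrow> real)
     \<Rightarrow> (nat \<Rightarrow> real) \<Rightarrow> real" where
  "calm_score d reg b0 f x = b0 + (\<Sum>i<d. f i (reg i (drop_coord d i x)) (x i))"

definition calm_class ::
  "nat \<Rightarrow> (nat \<Rightarrow> (nat \<Rightarrow> real) \<Rightarrow> nat) \<Rightarrow> ((nat \<Rightarrow> real) \<Rightarrow> real) set" where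
  "calm_class d reg = {s. \<exists>b0 f. s = calm_score d reg b0 f}"

definition emp_risk ::
  "nat \<Rightarrow> (nat \<Rightarrow> nat \<Rightarrow> real) \<Rightarrow> (nat \<Rightarrow> real) \<Rightarrow> ((nat \<Rightarrow> real) \<Rightarrow> real) \<Rightarrow> real" where
  "emp_risk N X Y s = (1 / real N) * (\<Sum>k<N. (Y k - s (X k))^2)"

definition emp_dist2 ::
  "nat \<Rightarrow> (nat \<Rightarrow> nat \<Rightarrow> real) \<Rightarrow> ((nat \<Rightarrow> real) \<Rightarrow> real) \<Rightarrow> ((nat \<Rightarrow> real) \<Rightarrow> real) \<Rightarrow> real" where
  "emp_dist2 N X s t = (1 / real N) * (\<Sum>k<N. (s (X k) - t (X k))^2)"

definition pair_list :: "nat \<Rightarrow> (nat \<Rightarrow> nat) \<Rightarrow> (nat \<times> nat) list" where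
  "pair_list d R = concat (map (\<lambda>i. map (\<lambda>r. (i, r)) [1..<Suc (R i)]) [0..<d])"

definition sched :: "nat \<Rightarrow> (nat \<Rightarrow> nat) \<Rightarrow> nat \<Rightarrow> nat \<times> nat" where
  "sched d R n = pair_list d R ! (n mod length (pair_list d R))"

text \<open>One exact regional backfitting step: the state (b0', f') arises from (b0, f)
by replacing f_i^{(r)} with an exact minimiser g of the empirical risk over that
single univariate function (all others and b0 fixed). (Only samples in region r
involve f_i^{(r)}, so this is the same as minimising over those samples.)
The empirical centering step is a reparametrisation that by stipulation leaves
fitted values and risk unchanged.\<close>
definition exact_step ::
  "nat \<Rightarrow> (nat \<Rightarrow> nat \<Rightarrow> real) \<Rightarrow> (nat \<Rightarrow> real) \<Rightarrow> nat \<Rightarrow> (nat \<Rightarrow> (nat \<Rightarrow> real) \<Rightarrow> nat)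
     \<Rightarrow> nat \<times> nat \<Rightarrow> real \<times> (nat \<Rightarrow> nat \<Rightarrow> real \<Rightarrow> real)
     \<Rightarrow> real \<times> (nat \<Rightarrow> nat \<Rightarrow> real \<Rightarrow> real) \<Rightarrow> bool" where
  "exact_step N X Y d reg ir st st' \<longleftrightarrow>
     (case ir of (i, r) \<Rightarrow> case st of (b0, f) \<Rightarrow>
       (\<exists>g. st' = (b0, f(i := (f i)(r := g))) \<and>
            (\<forall>h. emp_risk N X Y (calm_score d reg b0 (f(i := (f i)(r := g))))
                 \<le> emp_risk N X Y (calm_score d reg b0 (f(i := (f i)(r := h)))))))"

end

theory Submission
  imports Defs
begin

text \<open>Identify a score with its vector of fitted values and use the empirical inner product
  on \<open>\<real>\<^sup>N\<close>. The fitted values of CALM scores form a subspace \<open>V\<close> spanned by finitely many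
  region-wise fits, so the orthogonal projection \<open>p\<close> of \<open>Y\<close> onto \<open>V\<close> exists, and the risk of
  a score \<open>s\<close> is \<open>(\<parallel>Y - p\<parallel>\<^sup>2 + \<parallel>s - p\<parallel>\<^sup>2) / N\<close>: the minimisers are exactly the scores
  whose fitted values equal \<open>p\<close>.

  An exact step minimises over one region block, so afterwards the residual is orthogonal to
  that block. For the error \<open>e\<^sub>n\<close> (fitted values minus \<open>p\<close>) this gives
  \<open>\<parallel>e\<^sub>n\<parallel>\<^sup>2 = \<parallel>e\<^sub>n\<^sub>+\<^sub>1\<parallel>\<^sup>2 + \<parallel>e\<^sub>n\<^sub>+\<^sub>1 - e\<^sub>n\<parallel>\<^sup>2\<close>: the risk decreases and the increments vanish.
  Every block is revisited within one cycle, where the inner product of the error with it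
  is reset to zero, so \<open>e\<^sub>n\<close> becomes asymptotically orthogonal to every block and hence to \<open>V\<close>.
  As \<open>e\<^sub>n \<in> V\<close>, this forces \<open>e\<^sub>n \<rightarrow> 0\<close>.\<close>

section \<open>The empirical inner product\<close>

definition sample_inner :: "nat \<Rightarrow> (nat \<Rightarrow> real) \<Rightarrow> (nat \<Rightarrow> real) \<Rightarrow> real" where
  "sample_inner N u v = (\<Sum>k<N. u k * v k)"

lemma sample_inner_commute: "sample_inner N u v = sample_inner N v u"
  by (simp add: sample_inner_def mult.commute)

lemma sample_inner_cong:
  "(\<And>k. k < N \<Longrightarrow> u k = u' k) \<Longrightarrow> (\<And>k. k < N \<Longrightarrow> v k = v' k)
    \<Longrightarrow> sample_inner N u v = sample_inner N u' v'"
  by (simp add: sample_inner_def)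

lemma sample_inner_diff_left:
  "sample_inner N (\<lambda>k. u k - v k) w = sample_inner N u w - sample_inner N v w"
  by (simp add: sample_inner_def sum_subtractf left_diff_distrib)

lemma sample_inner_scale_left:
  "sample_inner N (\<lambda>k. c * u k) w = c * sample_inner N u w"
  by (simp add: sample_inner_def sum_distrib_left mult.assoc)

lemma sample_inner_add_right:
  "sample_inner N u (\<lambda>k. v k + w k) = sample_inner N u v + sample_inner N u w"
  by (simp add: sample_inner_def sum.distrib distrib_left)

lemma sample_inner_scale_right:
  "sample_inner N u (\<lambda>k. c * v k) = c * sample_inner N u v"
  by (simp add: sample_inner_def sum_distrib_left algebra_simps)

lemma sample_inner_sum_right:
  "sample_inner N u (\<lambda>k. \<Sum>j\<in>J. v j k) = (\<Sum>j\<in>J. sample_inner N u (v j))"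
  by (simp add: sample_inner_def sum_distrib_left sum.swap[of _ J])

lemma sample_inner_diff_self:
  "sample_inner N (\<lambda>k. u k - v k) (\<lambda>k. u k - v k)
    = sample_inner N u u - 2 * sample_inner N u v + sample_inner N v v"
  by (simp add: sample_inner_def sum_subtractf sum.distrib sum_distrib_left algebra_simps)

lemma sample_inner_self_nonneg: "0 \<le> sample_inner N u u"
  by (simp add: sample_inner_def sum_nonneg)

lemma sample_inner_self_eq_0_iff: "sample_inner N u u = 0 \<longleftrightarrow> (\<forall>k<N. u k = 0)"
  by (auto simp: sample_inner_def sum_nonneg_eq_0_iff)

lemma sq_le_sample_inner_self: "k < N \<Longrightarrow> (u k)\<^sup>2 \<le> sample_inner N u u"
  unfolding sample_inner_def power2_eq_square
  by (rule member_le_sum) auto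

lemma sample_inner_indicator_left: "k < N \<Longrightarrow> sample_inner N (\<lambda>l. if l = k then 1 else 0) u = u k"
  by (simp add: sample_inner_def if_distrib[of "\<lambda>c. c * _"] cong: if_cong)

lemma orthogonal_if_minimal_on_line:
  assumes "\<And>t. sample_inner N e e \<le> sample_inner N (\<lambda>k. e k - t * u k) (\<lambda>k. e k - t * u k)"
  shows "sample_inner N e u = 0"
proof -
  define A where "A = sample_inner N e u"
  define B where "B = sample_inner N u u"
  have quadratic: "0 \<le> t\<^sup>2 * B - 2 * t * A" for t
    using assms[of t]
    by (simp add: sample_inner_diff_self sample_inner_scale_left sample_inner_scale_right
        A_def B_def power2_eq_square algebra_simps)
  have "0 \<le> B"
    by (simp add: B_def sample_inner_self_nonneg)
  have "A = 0"
  proof (cases "B = 0")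
    case True
    then show ?thesis
      using quadratic[of A] by (auto simp: power2_eq_square mult_le_0_iff)
  next
    case False
    then have "0 \<le> - A\<^sup>2 / B"
      using quadratic[of "A / B"] by (simp add: power2_eq_square field_simps)
    then show ?thesis
      using \<open>0 \<le> B\<close> False by (simp add: divide_le_0_iff)
  qed
  then show ?thesis
    by (simp add: A_def)
qed

lemma orthogonal_projection_onto_span_exists:
  assumes "finite J"
  shows "\<exists>c. \<forall>j\<in>J. sample_inner N (\<lambda>k. y k - (\<Sum>l\<in>J. c l * g l k)) (g j) = 0"
  using assms
proof (induction J arbitrary: y rule: finite_induct)
  case empty
  show ?case by simp
next
  case (insert a J)
  obtain cy where cy: "\<forall>j\<in>J. sample_inner N (\<lambda>k. y k - (\<Sum>l\<in>J. cy l * g l k)) (g j) = 0"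
    using insert.IH by blast
  obtain ca where ca: "\<forall>j\<in>J. sample_inner N (\<lambda>k. g a k - (\<Sum>l\<in>J. ca l * g l k)) (g j) = 0"
    using insert.IH by blast
  define e where "e k = y k - (\<Sum>l\<in>J. cy l * g l k)" for k
  define w where "w k = g a k - (\<Sum>l\<in>J. ca l * g l k)" for k
  define t where "t = sample_inner N e w / sample_inner N w w"
  \<comment> \<open>\<open>w\<close> is the part of \<open>g a\<close> orthogonal to \<open>g ` J\<close>; correct the residual \<open>e\<close> along it.\<close>
  define c where "c l = (if l = a then t else cy l - t * ca l)" for l
  have residual: "y k - (\<Sum>l\<in>insert a J. c l * g l k) = e k - t * w k" for k
  proof -
    have "(\<Sum>l\<in>J. c l * g l k) = (\<Sum>l\<in>J. cy l * g l k - t * (ca l * g l k))"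
      using insert.hyps(2) by (intro sum.cong) (auto simp: c_def algebra_simps)
    then show ?thesis
      using insert.hyps by (simp add: c_def e_def w_def sum_subtractf sum_distrib_left algebra_simps)
  qed
  \<comment> \<open>If \<open>w\<close> vanishes on the sample, then \<open>t = 0\<close> by the convention \<open>x / 0 = 0\<close>.\<close>
  have orth_w: "sample_inner N (\<lambda>k. e k - t * w k) w = 0"
  proof (cases "sample_inner N w w = 0")
    case True
    then have "\<forall>k<N. w k = 0"
      by (simp add: sample_inner_self_eq_0_iff)
    then show ?thesis
      by (simp add: sample_inner_def)
  next
    case False
    then show ?thesis
      by (simp add: sample_inner_diff_left sample_inner_scale_left) (simp add: t_def)
  qed
  have orth_J: "sample_inner N (\<lambda>k. e k - t * w k) (g j) = 0" if "j \<in> J" for j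
    using cy ca that by (simp add: sample_inner_diff_left sample_inner_scale_left e_def[abs_def] w_def[abs_def])
  have "sample_inner N (\<lambda>k. e k - t * w k) (g a)
      = sample_inner N (\<lambda>k. e k - t * w k) (\<lambda>k. w k + (\<Sum>l\<in>J. ca l * g l k))"
    by (simp add: w_def)
  also have "\<dots> = 0"
    using orth_w orth_J by (simp add: sample_inner_add_right sample_inner_sum_right sample_inner_scale_right)
  finally have orth_a: "sample_inner N (\<lambda>k. e k - t * w k) (g a) = 0" .
  show ?case
    using orth_a orth_J by (intro exI[of _ c]) (simp add: residual)
qed

section \<open>Sequences that keep returning to zero\<close>

lemma mod_in_window:
  fixes j m n :: nat
  assumes "j < m"
  shows "\<exists>n'. n \<le> n' \<and> n' < n + m \<and> n' mod m = j"
proof -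
  have n: "n = m * (n div m) + n mod m" and "n mod m < m"
    using assms by simp_all
  consider "n mod m \<le> j" | "j < n mod m"
    by linarith
  then show ?thesis
  proof cases
    case 1
    then have "n \<le> m * (n div m) + j" "m * (n div m) + j < n + m"
      using assms n by linarith+
    moreover have "(m * (n div m) + j) mod m = j"
      using assms by simp
    ultimately show ?thesis
      by blast
  next
    case 2
    moreover have "m * Suc (n div m) = m * (n div m) + m"
      by simp
    ultimately have "n \<le> m * Suc (n div m) + j" "m * Suc (n div m) + j < n + m"
      using \<open>n mod m < m\<close> n by linarith+
    moreover have "(m * Suc (n div m) + j) mod m = j"
      using assms by (subst mod_mult_self4) simp
    ultimately show ?thesis
      by blast
  qed
qed

lemma LIMSEQ_zero_if_recurrently_zero:
  fixes b :: "nat \<Rightarrow> real"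
  assumes increments: "(\<lambda>n. b (Suc n) - b n) \<longlonglongrightarrow> 0"
    and recurrent: "\<And>n. \<exists>n'. n \<le> n' \<and> n' < n + m \<and> b (Suc n') = 0"
  shows "b \<longlonglongrightarrow> 0"
proof -
  define D where "D n = (\<Sum>l<m. \<bar>b (Suc (n + l)) - b (n + l)\<bar>)" for n
  have "D \<longlonglongrightarrow> 0"
    unfolding D_def
    by (intro tendsto_null_sum tendsto_rabs_zero LIMSEQ_ignore_initial_segment[OF increments, simplified])
  have bound: "\<bar>b (n + m)\<bar> \<le> D n" for n
  proof -
    obtain n' where n': "n \<le> n'" "n' < n + m" "b (Suc n') = 0"
      using recurrent by blast
    have "b (n + m) = (\<Sum>l = Suc n'..<n + m. b (Suc l) - b l)"
      using sum_Suc_diff'[of "Suc n'" "n + m" b] n' by simp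
    then have "\<bar>b (n + m)\<bar> \<le> (\<Sum>l = Suc n'..<n + m. \<bar>b (Suc l) - b l\<bar>)"
      by simp
    also have "\<dots> \<le> (\<Sum>l = n..<n + m. \<bar>b (Suc l) - b l\<bar>)"
      using n' by (intro sum_mono2) auto
    also have "\<dots> = D n"
      using sum.shift_bounds_nat_ivl[of "\<lambda>l. \<bar>b (Suc l) - b l\<bar>" 0 n m]
      by (simp add: D_def atLeast0LessThan add.commute)
    finally show ?thesis .
  qed
  have "(\<lambda>n. b (n + m)) \<longlonglongrightarrow> 0"
    by (rule tendsto_rabs_zero_cancel, rule tendsto_sandwich[OF _ _ tendsto_const \<open>D \<longlonglongrightarrow> 0\<close>])
      (use bound in auto)
  then show ?thesis
    by (rule LIMSEQ_offset)
qed

section \<open>Fitted values of CALM scores\<close>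

definition region_score ::
  "nat \<Rightarrow> (nat \<Rightarrow> (nat \<Rightarrow> real) \<Rightarrow> nat) \<Rightarrow> nat \<Rightarrow> nat \<Rightarrow> (real \<Rightarrow> real) \<Rightarrow> (nat \<Rightarrow> real) \<Rightarrow> real"
  where "region_score d reg i r h x = (if reg i (drop_coord d i x) = r then h (x i) else 0)"

definition calm_fits ::
  "nat \<Rightarrow> (nat \<Rightarrow> (nat \<Rightarrow> real) \<Rightarrow> nat) \<Rightarrow> (nat \<Rightarrow> nat \<Rightarrow> real) \<Rightarrow> (nat \<Rightarrow> real) set"
  where "calm_fits d reg X = (\<lambda>s k. s (X k)) ` calm_class d reg"

lemma calm_fitsI: "s \<in> calm_class d reg \<Longrightarrow> (\<lambda>k. s (X k)) \<in> calm_fits d reg X"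
  by (simp add: calm_fits_def)

lemma calm_score_in_calm_fits: "(\<lambda>k. calm_score d reg b0 f (X k)) \<in> calm_fits d reg X"
  unfolding calm_fits_def calm_class_def by (rule imageI) blast

lemma calm_fits_lincomb:
  assumes "u \<in> calm_fits d reg X" and "v \<in> calm_fits d reg X"
  shows "(\<lambda>k. a * u k + b * v k) \<in> calm_fits d reg X"
proof -
  obtain b0 f b1 g where "u = (\<lambda>k. calm_score d reg b0 f (X k))" "v = (\<lambda>k. calm_score d reg b1 g (X k))"
    using assms by (auto simp: calm_fits_def calm_class_def)
  then have "(\<lambda>k. a * u k + b * v k)
      = (\<lambda>k. calm_score d reg (a * b0 + b * b1) (\<lambda>i r t. a * f i r t + b * g i r t) (X k))"
    by (simp add: calm_score_def sum.distrib sum_distrib_left algebra_simps)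
  then show ?thesis
    by (simp add: calm_score_in_calm_fits)
qed

lemma calm_fits_diff:
  "u \<in> calm_fits d reg X \<Longrightarrow> v \<in> calm_fits d reg X \<Longrightarrow> (\<lambda>k. u k - v k) \<in> calm_fits d reg X"
  using calm_fits_lincomb[of u d reg X v 1 "-1"] by simp

lemma calm_fits_sum:
  assumes "finite J" and "\<And>j. j \<in> J \<Longrightarrow> v j \<in> calm_fits d reg X"
  shows "(\<lambda>k. \<Sum>j\<in>J. c j * v j k) \<in> calm_fits d reg X"
  using assms
proof (induction J rule: finite_induct)
  case empty
  have "(\<lambda>k. 0) = (\<lambda>k. calm_score d reg 0 (\<lambda>_ _ _. 0) (X k))"
    by (simp add: calm_score_def)
  then show ?case
    by (simp add: calm_score_in_calm_fits)
next
  case (insert j J)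
  then show ?case
    using calm_fits_lincomb[of "v j" d reg X "\<lambda>k. \<Sum>j\<in>J. c j * v j k" "c j" 1] by simp
qed

lemma calm_score_fun_upd:
  assumes "i < d"
  shows "calm_score d reg b0 (f(i := (f i)(r := h))) x
       = calm_score d reg b0 f x + region_score d reg i r (\<lambda>t. h t - f i r t) x"
proof -
  have "(\<Sum>i'<d. (f(i := (f i)(r := h))) i' (reg i' (drop_coord d i' x)) (x i'))
      = (\<Sum>i'<d. f i' (reg i' (drop_coord d i' x)) (x i')
          + (if i' = i then region_score d reg i r (\<lambda>t. h t - f i r t) x else 0))"
    by (intro sum.cong) (auto simp: region_score_def)
  then show ?thesis
    using assms by (simp add: calm_score_def sum.distrib)
qed

lemma region_score_in_calm_class:
  assumes "i < d"
  shows "region_score d reg i r h \<in> calm_class d reg"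
proof -
  have "region_score d reg i r h = calm_score d reg 0 ((\<lambda>_ _ _. 0)(i := (\<lambda>_ _. 0)(r := h)))"
    using calm_score_fun_upd[OF assms, of reg 0 "\<lambda>_ _ _. 0" r h]
    by (simp add: calm_score_def fun_eq_iff)
  then show ?thesis
    by (auto simp: calm_class_def)
qed

text \<open>The intercept is absorbed into the shape functions of coordinate \<open>0\<close>.\<close>

lemma calm_score_eq_sum_region_scores:
  assumes "0 < d" and reg_range: "\<And>i z. i < d \<Longrightarrow> reg i z \<in> {1..R i}"
  shows "calm_score d reg b0 f x
       = (\<Sum>i<d. \<Sum>r=1..R i. region_score d reg i r (\<lambda>t. (if i = 0 then b0 else 0) + f i r t) x)"
proof -
  have "(\<Sum>r=1..R i. region_score d reg i r (\<lambda>t. (if i = 0 then b0 else 0) + f i r t) x)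
      = (if i = 0 then b0 else 0) + f i (reg i (drop_coord d i x)) (x i)" if "i < d" for i
    using reg_range[OF that] by (simp add: region_score_def)
  then show ?thesis
    using assms(1) by (simp add: calm_score_def sum.distrib)
qed

lemma calm_fit_region_decomposition:
  assumes "0 < d" and "\<And>i z. i < d \<Longrightarrow> reg i z \<in> {1..R i}" and "v \<in> calm_fits d reg X"
  obtains h where "\<And>w. sample_inner N w v
      = (\<Sum>i<d. \<Sum>r=1..R i. sample_inner N w (\<lambda>k. region_score d reg i r (h i r) (X k)))"
proof -
  obtain b0 f where "v = (\<lambda>k. calm_score d reg b0 f (X k))"
    using assms(3) by (auto simp: calm_fits_def calm_class_def)
  then have "sample_inner N w v
      = (\<Sum>i<d. \<Sum>r=1..R i. sample_inner N w
          (\<lambda>k. region_score d reg i r (\<lambda>t. (if i = 0 then b0 else 0) + f i r t) (X k)))" for w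
    by (simp only: calm_score_eq_sum_region_scores[OF assms(1,2)] sample_inner_sum_right)
  then show ?thesis
    by (rule that)
qed

lemma sample_inner_region_fit_expand:
  "sample_inner N w (\<lambda>k. region_score d reg i r h (X k))
    = (\<Sum>t\<in>(\<lambda>k. X k i) ` {..<N}.
         h t * sample_inner N w (\<lambda>k. region_score d reg i r (\<lambda>x. if x = t then 1 else 0) (X k)))"
proof -
  have "region_score d reg i r h (X k)
      = (\<Sum>t\<in>(\<lambda>k. X k i) ` {..<N}. h t * region_score d reg i r (\<lambda>x. if x = t then 1 else 0) (X k))"
    if "k < N" for k
    using that by (simp add: region_score_def if_distrib[of "\<lambda>c. _ * c"] cong: if_cong)
  then have "sample_inner N w (\<lambda>k. region_score d reg i r h (X k))
    = sample_inner N w (\<lambda>k. \<Sum>t\<in>(\<lambda>k. X k i) ` {..<N}.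
         h t * region_score d reg i r (\<lambda>x. if x = t then 1 else 0) (X k))"
    by (intro sample_inner_cong) simp_all
  then show ?thesis
    by (simp only: sample_inner_sum_right sample_inner_scale_right)
qed

lemma calm_fit_projection_exists:
  assumes "0 < d" and reg_range: "\<And>i z. i < d \<Longrightarrow> reg i z \<in> {1..R i}"
  obtains p where "p \<in> calm_fits d reg X"
    and "\<And>v. v \<in> calm_fits d reg X \<Longrightarrow> sample_inner N (\<lambda>k. y k - p k) v = 0"
proof -
  \<comment> \<open>On the sample, the fits are spanned by region scores of indicators of observed values.\<close>
  define J where "J = (SIGMA i:{..<d}. {1..R i} \<times> (\<lambda>k. X k i) ` {..<N})"
  define g where "g = (\<lambda>(i, r, t) k. region_score d reg i r (\<lambda>x. if x = t then 1 else 0) (X k))"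
  have "finite J"
    by (simp add: J_def)
  then obtain c where c: "\<forall>j\<in>J. sample_inner N (\<lambda>k. y k - (\<Sum>l\<in>J. c l * g l k)) (g j) = 0"
    using orthogonal_projection_onto_span_exists by blast
  define p where "p k = (\<Sum>l\<in>J. c l * g l k)" for k
  have p_fit: "p \<in> calm_fits d reg X"
    unfolding p_def[abs_def] using \<open>finite J\<close>
    by (intro calm_fits_sum) (auto simp: J_def g_def calm_fitsI region_score_in_calm_class)
  have region_orth: "sample_inner N (\<lambda>k. y k - p k) (\<lambda>k. region_score d reg i r h (X k)) = 0"
    if "i < d" "r \<in> {1..R i}" for i r h
  proof -
    have "sample_inner N (\<lambda>k. y k - p k)
        (\<lambda>k. region_score d reg i r (\<lambda>x. if x = t then 1 else 0) (X k)) = 0"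
      if "t \<in> (\<lambda>k. X k i) ` {..<N}" for t
    proof -
      have "(i, r, t) \<in> J"
        using \<open>i < d\<close> \<open>r \<in> {1..R i}\<close> that by (simp add: J_def)
      with c have "sample_inner N (\<lambda>k. y k - p k) (g (i, r, t)) = 0"
        by (simp add: p_def)
      then show ?thesis
        by (simp add: g_def)
    qed
    then show ?thesis
      by (subst sample_inner_region_fit_expand) simp
  qed
  have orth: "sample_inner N (\<lambda>k. y k - p k) v = 0" if v: "v \<in> calm_fits d reg X" for v
  proof -
    obtain h where "\<And>w. sample_inner N w v
        = (\<Sum>i<d. \<Sum>r=1..R i. sample_inner N w (\<lambda>k. region_score d reg i r (h i r) (X k)))"
      using calm_fit_region_decomposition[OF assms v] by blast
    then show ?thesis
      by (simp add: region_orth)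
  qed
  show ?thesis
    using p_fit orth by (rule that)
qed

lemma emp_risk_eq_sample_inner:
  "emp_risk N X Y s = sample_inner N (\<lambda>k. Y k - s (X k)) (\<lambda>k. Y k - s (X k)) / real N"
  by (simp add: emp_risk_def sample_inner_def power2_eq_square)

lemma emp_dist2_eq_sample_inner:
  "emp_dist2 N X s t = sample_inner N (\<lambda>k. s (X k) - t (X k)) (\<lambda>k. s (X k) - t (X k)) / real N"
  by (simp add: emp_dist2_def sample_inner_def power2_eq_square)

lemma exact_step_increment:
  assumes "exact_step N X Y d reg (i, r) st st'" and "i < d"
  obtains h where "\<And>x. calm_score d reg (fst st') (snd st') x
      = calm_score d reg (fst st) (snd st) x + region_score d reg i r h x"
  using assms by (auto simp: exact_step_def calm_score_fun_upd split: prod.splits)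

lemma exact_step_residual_orthogonal:
  assumes step: "exact_step N X Y d reg (i, r) st st'" and "i < d" and "0 < N"
  shows "sample_inner N (\<lambda>k. Y k - calm_score d reg (fst st') (snd st') (X k))
      (\<lambda>k. region_score d reg i r h (X k)) = 0"
proof -
  obtain b0 f g where st: "st = (b0, f)" "st' = (b0, f(i := (f i)(r := g)))"
    and optimal: "\<And>h. emp_risk N X Y (calm_score d reg b0 (f(i := (f i)(r := g))))
                 \<le> emp_risk N X Y (calm_score d reg b0 (f(i := (f i)(r := h))))"
    using step by (auto simp: exact_step_def split: prod.splits)
  let ?e = "\<lambda>k. Y k - calm_score d reg (fst st') (snd st') (X k)"
  let ?u = "\<lambda>k. region_score d reg i r h (X k)"
  show ?thesis
  proof (rule orthogonal_if_minimal_on_line)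
    fix t
    have perturbed: "Y k - calm_score d reg b0 (f(i := (f i)(r := (\<lambda>x. g x + t * h x)))) (X k)
        = ?e k - t * ?u k" for k
      using \<open>i < d\<close> by (simp add: st calm_score_fun_upd region_score_def algebra_simps)
    show "sample_inner N ?e ?e \<le> sample_inner N (\<lambda>k. ?e k - t * ?u k) (\<lambda>k. ?e k - t * ?u k)"
      using optimal[of "\<lambda>x. g x + t * h x"] \<open>0 < N\<close>
      by (simp add: emp_risk_eq_sample_inner perturbed st divide_le_cancel)
  qed
qed

lemma pair_list_set: "(i, r) \<in> set (pair_list d R) \<longleftrightarrow> i < d \<and> r \<in> {1..R i}"
  by (auto simp: pair_list_def image_iff)

lemma sched_in_pair_list: "pair_list d R \<noteq> [] \<Longrightarrow> sched d R n \<in> set (pair_list d R)"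
  by (simp add: sched_def)

lemma sched_visits:
  assumes "i < d" and "r \<in> {1..R i}"
  shows "\<exists>n'. n \<le> n' \<and> n' < n + length (pair_list d R) \<and> sched d R n' = (i, r)"
proof -
  obtain j where j: "j < length (pair_list d R)" "pair_list d R ! j = (i, r)"
    using assms pair_list_set by (metis in_set_conv_nth)
  then obtain n' where "n \<le> n'" "n' < n + length (pair_list d R)" "n' mod length (pair_list d R) = j"
    using mod_in_window by blast
  then show ?thesis
    using j by (auto simp: sched_def)
qed

section \<open>Exact cyclic backfitting\<close>

locale calm_projection =
  fixes N d :: nat and X :: "nat \<Rightarrow> nat \<Rightarrow> real" and Y :: "nat \<Rightarrow> real"
    and reg :: "nat \<Rightarrow> (nat \<Rightarrow> real) \<Rightarrow> nat" and p :: "nat \<Rightarrow> real"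
  assumes samples_nonempty: "0 < N"
    and projection_fit: "p \<in> calm_fits d reg X"
    and projection_orthogonal: "\<And>v. v \<in> calm_fits d reg X \<Longrightarrow> sample_inner N (\<lambda>k. Y k - p k) v = 0"
begin

lemma emp_risk_pythagoras:
  assumes "s \<in> calm_class d reg"
  shows "emp_risk N X Y s = (sample_inner N (\<lambda>k. Y k - p k) (\<lambda>k. Y k - p k)
      + sample_inner N (\<lambda>k. s (X k) - p k) (\<lambda>k. s (X k) - p k)) / real N"
proof -
  have "sample_inner N (\<lambda>k. Y k - p k) (\<lambda>k. s (X k) - p k) = 0"
    using assms by (intro projection_orthogonal calm_fits_diff calm_fitsI projection_fit)
  then show ?thesis
    using sample_inner_diff_self[of N "\<lambda>k. Y k - p k" "\<lambda>k. s (X k) - p k"]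
    by (simp add: emp_risk_eq_sample_inner)
qed

lemma calm_minimiser_iff:
  assumes "s \<in> calm_class d reg"
  shows "(\<forall>s'\<in>calm_class d reg. emp_risk N X Y s \<le> emp_risk N X Y s') \<longleftrightarrow> (\<forall>k<N. s (X k) = p k)"
proof
  assume minimal: "\<forall>s'\<in>calm_class d reg. emp_risk N X Y s \<le> emp_risk N X Y s'"
  obtain s' where s': "s' \<in> calm_class d reg" "p = (\<lambda>k. s' (X k))"
    using projection_fit by (auto simp: calm_fits_def)
  have "sample_inner N (\<lambda>k. s' (X k) - p k) (\<lambda>k. s' (X k) - p k) = 0"
    using s'(2) by (simp add: sample_inner_def)
  moreover have "emp_risk N X Y s \<le> emp_risk N X Y s'"
    using minimal s'(1) by blast
  ultimately have "sample_inner N (\<lambda>k. s (X k) - p k) (\<lambda>k. s (X k) - p k) \<le> 0"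
    using emp_risk_pythagoras[OF assms] emp_risk_pythagoras[OF s'(1)] samples_nonempty
    by (simp add: divide_le_cancel)
  then show "\<forall>k<N. s (X k) = p k"
    using sample_inner_self_nonneg[of N "\<lambda>k. s (X k) - p k"] by (simp add: sample_inner_self_eq_0_iff)
next
  assume "\<forall>k<N. s (X k) = p k"
  then have "sample_inner N (\<lambda>k. s (X k) - p k) (\<lambda>k. s (X k) - p k) = 0"
    by (simp add: sample_inner_self_eq_0_iff)
  then show "\<forall>s'\<in>calm_class d reg. emp_risk N X Y s \<le> emp_risk N X Y s'"
    using emp_risk_pythagoras[OF assms] emp_risk_pythagoras sample_inner_self_nonneg
    by (simp add: divide_right_mono)
qed

end

locale exact_backfitting = calm_projection +
  fixes R :: "nat \<Rightarrow> nat" and st :: "nat \<Rightarrow> real \<times> (nat \<Rightarrow> nat \<Rightarrow> real \<Rightarrow> real)"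
  assumes dim_pos: "0 < d"
    and reg_range: "\<And>i z. i < d \<Longrightarrow> reg i z \<in> {1..R i}"
    and exact_steps: "\<And>n. exact_step N X Y d reg (sched d R n) (st n) (st (Suc n))"
begin

definition score :: "nat \<Rightarrow> (nat \<Rightarrow> real) \<Rightarrow> real"
  where "score n = calm_score d reg (fst (st n)) (snd (st n))"

definition err :: "nat \<Rightarrow> nat \<Rightarrow> real"
  where "err n k = score n (X k) - p k"

definition sq_err :: "nat \<Rightarrow> real"
  where "sq_err n = sample_inner N (err n) (err n)"

lemma score_in_calm_class: "score n \<in> calm_class d reg"
  by (auto simp: score_def calm_class_def)

lemma err_in_calm_fits: "err n \<in> calm_fits d reg X"
  unfolding err_def[abs_def]
  by (intro calm_fits_diff calm_fitsI score_in_calm_class projection_fit)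

lemma sched_range:
  assumes "sched d R n = (i, r)"
  shows "i < d" and "r \<in> {1..R i}"
proof -
  have "(0, reg 0 (\<lambda>_. 0)) \<in> set (pair_list d R)"
    using reg_range[OF dim_pos] dim_pos by (simp add: pair_list_set)
  then have "sched d R n \<in> set (pair_list d R)"
    by (intro sched_in_pair_list) auto
  then show "i < d" and "r \<in> {1..R i}"
    using assms by (simp_all add: pair_list_set)
qed

lemma err_orthogonal_to_last_block:
  assumes "sched d R n = (i, r)"
  shows "sample_inner N (err (Suc n)) (\<lambda>k. region_score d reg i r h (X k)) = 0"
proof -
  have step: "exact_step N X Y d reg (i, r) (st n) (st (Suc n))"
    using exact_steps[of n] assms by simp
  have "err (Suc n) = (\<lambda>k. (Y k - p k) - (Y k - score (Suc n) (X k)))"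
    by (simp add: err_def[abs_def])
  then show ?thesis
    using exact_step_residual_orthogonal[OF step sched_range(1)[OF assms] samples_nonempty]
      projection_orthogonal[OF calm_fitsI[OF region_score_in_calm_class[OF sched_range(1)[OF assms]]]]
    by (simp add: sample_inner_diff_left score_def)
qed

lemma sq_err_Suc:
  "sq_err n = sq_err (Suc n) + sample_inner N (\<lambda>k. err (Suc n) k - err n k) (\<lambda>k. err (Suc n) k - err n k)"
proof -
  obtain i r where ir: "sched d R n = (i, r)"
    by (cases "sched d R n")
  have step: "exact_step N X Y d reg (i, r) (st n) (st (Suc n))"
    using exact_steps[of n] ir by simp
  obtain h where "\<And>x. calm_score d reg (fst (st (Suc n))) (snd (st (Suc n))) x
      = calm_score d reg (fst (st n)) (snd (st n)) x + region_score d reg i r h x"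
    using exact_step_increment[OF step sched_range(1)[OF ir]] by blast
  then have h: "score (Suc n) x = score n x + region_score d reg i r h x" for x
    by (simp add: score_def)
  define u where "u = (\<lambda>k. region_score d reg i r h (X k))"
  have increment: "(\<lambda>k. err (Suc n) k - err n k) = u"
    by (simp add: err_def h u_def)
  have "err n = (\<lambda>k. err (Suc n) k - u k)"
    by (simp add: fun_eq_iff err_def h u_def)
  then have "sq_err n = sq_err (Suc n) - 2 * sample_inner N (err (Suc n)) u + sample_inner N u u"
    unfolding sq_err_def by (simp only: sample_inner_diff_self)
  moreover have "sample_inner N (err (Suc n)) u = 0"
    unfolding u_def by (rule err_orthogonal_to_last_block[OF ir])
  ultimately show ?thesis
    unfolding increment by linarith
qed

lemma sq_err_Suc_le: "sq_err (Suc n) \<le> sq_err n"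
  using sq_err_Suc[of n] sample_inner_self_nonneg by simp

lemma err_increment_tendsto_0:
  assumes "k < N"
  shows "(\<lambda>n. err (Suc n) k - err n k) \<longlonglongrightarrow> 0"
proof -
  have "decseq sq_err"
    using sq_err_Suc_le by (simp add: decseq_Suc_iff)
  moreover have "\<forall>n. 0 \<le> sq_err n"
    by (simp add: sq_err_def sample_inner_self_nonneg)
  ultimately obtain L where "sq_err \<longlonglongrightarrow> L"
    using decseq_convergent by blast
  then have "(\<lambda>n. sq_err n - sq_err (Suc n)) \<longlonglongrightarrow> L - L"
    by (intro tendsto_diff LIMSEQ_Suc)
  then have "(\<lambda>n. sqrt (sq_err n - sq_err (Suc n))) \<longlonglongrightarrow> sqrt (L - L)"
    by (rule tendsto_real_sqrt)
  then have sqrt_decrement: "(\<lambda>n. sqrt (sq_err n - sq_err (Suc n))) \<longlonglongrightarrow> 0"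
    by simp
  have "\<bar>err (Suc n) k - err n k\<bar> \<le> sqrt (sq_err n - sq_err (Suc n))" for n
    using sq_le_sample_inner_self[OF assms, of "\<lambda>k. err (Suc n) k - err n k"] sq_err_Suc[of n]
    by (simp add: real_le_rsqrt)
  then have "(\<lambda>n. \<bar>err (Suc n) k - err n k\<bar>) \<longlonglongrightarrow> 0"
    by (intro tendsto_sandwich[OF _ _ tendsto_const sqrt_decrement]) simp_all
  then show ?thesis
    by (rule tendsto_rabs_zero_cancel)
qed

lemma inner_err_region_fit_tendsto_0:
  assumes "i < d" and "r \<in> {1..R i}"
  shows "(\<lambda>n. sample_inner N (err n) (\<lambda>k. region_score d reg i r h (X k))) \<longlonglongrightarrow> 0"
proof (rule LIMSEQ_zero_if_recurrently_zero)
  have "(\<lambda>n. sample_inner N (\<lambda>k. err (Suc n) k - err n k) (\<lambda>k. region_score d reg i r h (X k)))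
      \<longlonglongrightarrow> 0"
    unfolding sample_inner_def
    by (intro tendsto_null_sum tendsto_mult_left_zero err_increment_tendsto_0) simp
  then show "(\<lambda>n. sample_inner N (err (Suc n)) (\<lambda>k. region_score d reg i r h (X k))
      - sample_inner N (err n) (\<lambda>k. region_score d reg i r h (X k))) \<longlonglongrightarrow> 0"
    by (simp add: sample_inner_diff_left)
  show "\<exists>n'. n \<le> n' \<and> n' < n + length (pair_list d R)
      \<and> sample_inner N (err (Suc n')) (\<lambda>k. region_score d reg i r h (X k)) = 0" for n
    using sched_visits[of i d r R n, OF assms] err_orthogonal_to_last_block by blast
qed

lemma inner_err_calm_fit_tendsto_0:
  assumes "v \<in> calm_fits d reg X"
  shows "(\<lambda>n. sample_inner N (err n) v) \<longlonglongrightarrow> 0"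
proof -
  obtain h where "\<And>w. sample_inner N w v
      = (\<Sum>i<d. \<Sum>r=1..R i. sample_inner N w (\<lambda>k. region_score d reg i r (h i r) (X k)))"
    using calm_fit_region_decomposition[OF dim_pos reg_range assms] by blast
  then show ?thesis
    by (simp only:) (intro tendsto_null_sum inner_err_region_fit_tendsto_0; simp)
qed

text \<open>Test against the projection \<open>q\<close> of the \<open>k\<close>-th unit vector onto the fits: since
  \<open>err n\<close> is itself a fit, it cannot tell \<open>q\<close> from the unit vector.\<close>
lemma err_tendsto_0:
  assumes "k < N"
  shows "(\<lambda>n. err n k) \<longlonglongrightarrow> 0"
proof -
  obtain q where q: "q \<in> calm_fits d reg X"
    and q_orth: "\<And>v. v \<in> calm_fits d reg X
      \<Longrightarrow> sample_inner N (\<lambda>l. (if l = k then 1 else 0) - q l) v = 0"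
    using calm_fit_projection_exists[of d reg R X N "\<lambda>l. if l = k then 1 else 0", OF dim_pos reg_range]
    by blast
  have "err n k = sample_inner N (err n) q" for n
    using q_orth[OF err_in_calm_fits, of n] sample_inner_indicator_left[OF assms, of "err n"]
    by (simp add: sample_inner_diff_left sample_inner_commute)
  then show ?thesis
    using inner_err_calm_fit_tendsto_0[OF q] by simp
qed

lemma sq_err_tendsto_0: "sq_err \<longlonglongrightarrow> 0"
  unfolding sq_err_def[abs_def] sample_inner_def
  by (intro tendsto_null_sum tendsto_mult_zero err_tendsto_0) simp_all

end

theorem propositionA3:
  fixes N d :: nat
    and X :: "nat \<Rightarrow> nat \<Rightarrow> real"
    and Y :: "nat \<Rightarrow> real"
    and reg :: "nat \<Rightarrow> (nat \<Rightarrow> real) \<Rightarrow> nat"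
    and R :: "nat \<Rightarrow> nat"
    and st :: "nat \<Rightarrow> real \<times> (nat \<Rightarrow> nat \<Rightarrow> real \<Rightarrow> real)"
  assumes "N \<ge> 1" and "d \<ge> 1"
    and "\<And>i z. i < d \<Longrightarrow> reg i z \<in> {1..R i}"
    and "\<And>n. exact_step N X Y d reg (sched d R n) (st n) (st (Suc n))"
  shows "(\<forall>n. emp_risk N X Y (calm_score d reg (fst (st (Suc n))) (snd (st (Suc n))))
              \<le> emp_risk N X Y (calm_score d reg (fst (st n)) (snd (st n))))
       \<and> (\<exists>shat \<in> calm_class d reg.
            (\<forall>s \<in> calm_class d reg. emp_risk N X Y shat \<le> emp_risk N X Y s)
          \<and> (\<lambda>n. emp_dist2 N X (calm_score d reg (fst (st n)) (snd (st n))) shat)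
              \<longlonglongrightarrow> 0)
       \<and> (\<forall>s1 \<in> calm_class d reg. \<forall>s2 \<in> calm_class d reg.
            (\<forall>s \<in> calm_class d reg. emp_risk N X Y s1 \<le> emp_risk N X Y s) \<longrightarrow>
            (\<forall>s \<in> calm_class d reg. emp_risk N X Y s2 \<le> emp_risk N X Y s) \<longrightarrow>
            (\<forall>k<N. s1 (X k) = s2 (X k)))"
proof -
  have "0 < d"
    using assms(2) by simp
  obtain p where "p \<in> calm_fits d reg X"
    and "\<And>v. v \<in> calm_fits d reg X \<Longrightarrow> sample_inner N (\<lambda>k. Y k - p k) v = 0"
    using calm_fit_projection_exists[of d reg R X N Y, OF \<open>0 < d\<close> assms(3)] by blast
  then interpret exact_backfitting N d X Y reg p R st
    using assms by unfold_locales auto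
  obtain shat where shat: "shat \<in> calm_class d reg" "\<And>k. shat (X k) = p k"
    using projection_fit by (auto simp: calm_fits_def)
  have descent: "emp_risk N X Y (score (Suc n)) \<le> emp_risk N X Y (score n)" for n
    using sq_err_Suc_le[of n]
    by (simp add: emp_risk_pythagoras[OF score_in_calm_class] sq_err_def err_def[abs_def] divide_right_mono)
  have "emp_dist2 N X (score n) shat = sq_err n / real N" for n
    by (simp add: emp_dist2_eq_sample_inner sq_err_def err_def[abs_def] shat(2))
  then have "(\<lambda>n. emp_dist2 N X (score n) shat) \<longlonglongrightarrow> 0"
    using tendsto_divide_zero[OF sq_err_tendsto_0] by simp
  moreover have "\<forall>s\<in>calm_class d reg. emp_risk N X Y shat \<le> emp_risk N X Y s"
    using calm_minimiser_iff[OF shat(1)] shat(2) by simp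
  moreover have "\<forall>s1\<in>calm_class d reg. \<forall>s2\<in>calm_class d reg.
      (\<forall>s\<in>calm_class d reg. emp_risk N X Y s1 \<le> emp_risk N X Y s) \<longrightarrow>
      (\<forall>s\<in>calm_class d reg. emp_risk N X Y s2 \<le> emp_risk N X Y s) \<longrightarrow>
      (\<forall>k<N. s1 (X k) = s2 (X k))"
    by (simp add: calm_minimiser_iff)
  ultimately show ?thesis
    unfolding score_def[symmetric] using descent shat(1) by blast
qed

end
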